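(* Let $a_1,a_2,a_3$ be distinct positive integers and let $m_1,m_2$ be distinct positive integers. Then there exists a permutation $\pi$ of $\{1,2,3\}$ such that $$(a_{\pi(1)}-m_1)(a_{\pi(1)}-m_2)(a_{\pi(1)}+a_{\pi(2)}-m_1)(a_{\pi(1)}+a_{\pi(2)}-m_2)\neq 0.$$ *)

theory Defs
  imports Main "HOL-Combinatorics.Permutations"
begin

end

theory Submission
  imports Defs
begin

text \<open>Let \<open>A = {a\<^sub>1, a\<^sub>2, a\<^sub>3}\<close> and \<open>M = {m\<^sub>1, m\<^sub>2}\<close>; we need distinct \<open>x, y \<in> A\<close> with
  \<open>x \<notin> M\<close> and \<open>x + y \<notin> M\<close>. Suppose there are none and pick \<open>u \<in> A - M\<close>, with \<open>v, w\<close>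
  the other two elements. The two distinct sums \<open>u + v\<close>, \<open>u + w\<close> then fill \<open>M\<close>. If \<open>v\<close>
  is also outside \<open>M\<close>, likewise \<open>M = {v + u, v + w}\<close>, forcing \<open>u = v\<close>; if \<open>v, w \<in> M\<close>,
  then \<open>M = {v, w}\<close>, and comparing the two descriptions of \<open>M\<close> gives \<open>2u = 0\<close>.\<close>

lemma eq_doubleton_if_card_le_2:
  assumes "finite M" "card M \<le> 2" "x \<in> M" "y \<in> M" "x \<noteq> y"
  shows "M = {x, y}"
  using card_seteq[of M "{x, y}"] assms by auto

lemma exists_pair_avoiding:
  fixes A M :: "'a::linordered_ab_group_add set"
  assumes card_A: "card A = 3" and "finite M" "card M \<le> 2"
    and pos: "\<And>x. x \<in> A \<Longrightarrow> 0 < x"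
  shows "\<exists>x\<in>A. \<exists>y\<in>A. x \<noteq> y \<and> x \<notin> M \<and> x + y \<notin> M"
proof (rule ccontr)
  assume "\<not> ?thesis"
  then have bad: "x + y \<in> M" if "x \<in> A" "y \<in> A" "x \<noteq> y" "x \<notin> M" for x y
    using that by blast
  have sums_fill: "M = {x + y, x + z}"
    if "x \<in> A" "y \<in> A" "z \<in> A" "x \<notin> M" "x \<noteq> y" "x \<noteq> z" "y \<noteq> z" for x y z
    using that by (intro eq_doubleton_if_card_le_2 \<open>finite M\<close> \<open>card M \<le> 2\<close> bad) auto
  have "\<not> A \<subseteq> M"
  proof
    assume "A \<subseteq> M"
    with card_A \<open>card M \<le> 2\<close> show False
      using card_mono[OF \<open>finite M\<close> \<open>A \<subseteq> M\<close>] by simp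
  qed
  then obtain u where "u \<in> A" "u \<notin> M" by blast
  have "card (A - {u}) = 2"
    using card_A \<open>u \<in> A\<close> by simp
  then obtain v w where vw: "A - {u} = {v, w}" "v \<noteq> w"
    by (auto simp: card_2_iff)
  then have "v \<in> A" "w \<in> A" "u \<noteq> v" "u \<noteq> w" by auto
  have M: "M = {u + v, u + w}"
    using \<open>u \<notin> M\<close> \<open>u \<noteq> v\<close> \<open>u \<noteq> w\<close> vw(2) by (intro sums_fill \<open>u \<in> A\<close> \<open>v \<in> A\<close> \<open>w \<in> A\<close>)
  consider "v \<notin> M" | "w \<notin> M" | "v \<in> M" "w \<in> M" by blast
  then show False
  proof cases
    case 1
    then have "M = {v + u, v + w}"
      using \<open>u \<noteq> v\<close> \<open>u \<noteq> w\<close> vw(2) by (intro sums_fill \<open>u \<in> A\<close> \<open>v \<in> A\<close> \<open>w \<in> A\<close>) auto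
    with M vw(2) \<open>u \<noteq> v\<close> show False
      by (auto simp: doubleton_eq_iff add.commute)
  next
    case 2
    then have "M = {w + u, w + v}"
      using \<open>u \<noteq> v\<close> \<open>u \<noteq> w\<close> vw(2) by (intro sums_fill \<open>u \<in> A\<close> \<open>v \<in> A\<close> \<open>w \<in> A\<close>) auto
    with M vw(2) \<open>u \<noteq> w\<close> show False
      by (auto simp: doubleton_eq_iff add.commute)
  next
    case 3
    then have "M = {v, w}"
      using vw(2) by (intro eq_doubleton_if_card_le_2 \<open>finite M\<close> \<open>card M \<le> 2\<close>)
    with M have "{u + v, u + w} = {v, w}"
      by simp
    then have "u = 0 \<or> u + u = 0"
      by (auto simp: doubleton_eq_iff algebra_simps)
    with pos[OF \<open>u \<in> A\<close>] show False
      by (auto simp: add_pos_pos)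
  qed
qed

lemma permutes_exists_map_two:
  assumes "p \<in> S" "q \<in> S" "p \<noteq> q" "i \<in> S" "j \<in> S" "i \<noteq> j"
  shows "\<exists>\<pi>. \<pi> permutes S \<and> \<pi> p = i \<and> \<pi> q = j"
proof -
  define q' where "q' = transpose p i q"
  have "q' \<in> S" "q' \<noteq> i"
    using assms by (auto simp: q'_def transpose_def)
  let ?\<pi> = "transpose q' j \<circ> transpose p i"
  have "?\<pi> permutes S"
    using assms \<open>q' \<in> S\<close> by (intro permutes_compose permutes_swap_id)
  moreover have "?\<pi> p = i" "?\<pi> q = j"
    using \<open>q' \<noteq> i\<close> \<open>i \<noteq> j\<close> by (auto simp: q'_def)
  ultimately show ?thesis by blast
qed

theorem theorem1:
  fixes a :: "nat \<Rightarrow> int" and m1 m2 :: int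
  assumes "\<And>i. i \<in> {1,2,3} \<Longrightarrow> a i > 0"
    and "inj_on a {1,2,3}"
    and "m1 > 0" and "m2 > 0" and "m1 \<noteq> m2"
  shows "\<exists>\<pi>. \<pi> permutes {1::nat,2,3} \<and>
    (a (\<pi> 1) - m1) * (a (\<pi> 1) - m2) * (a (\<pi> 1) + a (\<pi> 2) - m1) * (a (\<pi> 1) + a (\<pi> 2) - m2) \<noteq> 0"
proof -
  have "card (a ` {1, 2, 3}) = 3"
    using card_image[OF assms(2)] by simp
  moreover have "card {m1, m2} \<le> 2"
    by (simp add: card_insert_if)
  moreover have "0 < x" if "x \<in> a ` {1, 2, 3}" for x
    using that assms(1) by blast
  ultimately have "\<exists>x\<in>a ` {1, 2, 3}. \<exists>y\<in>a ` {1, 2, 3}. x \<noteq> y \<and> x \<notin> {m1, m2} \<and> x + y \<notin> {m1, m2}"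
    by (intro exists_pair_avoiding) simp_all
  then obtain i where "i \<in> {1, 2, 3}"
    and "\<exists>y\<in>a ` {1, 2, 3}. a i \<noteq> y \<and> a i \<notin> {m1, m2} \<and> a i + y \<notin> {m1, m2}"
    by (rule bex_imageD[THEN bexE])
  then obtain j where ij: "i \<in> {1, 2, 3}" "j \<in> {1, 2, 3}" "a i \<noteq> a j"
    and "a i \<notin> {m1, m2}" "a i + a j \<notin> {m1, m2}"
    by (blast dest: bex_imageD)
  obtain \<pi> where "\<pi> permutes {1::nat, 2, 3}" "\<pi> 1 = i" "\<pi> 2 = j"
    using permutes_exists_map_two[of 1 "{1::nat, 2, 3}" 2 i j] ij by fastforce
  with \<open>a i \<notin> {m1, m2}\<close> \<open>a i + a j \<notin> {m1, m2}\<close> show ?thesis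
    by auto
qed

end
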